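(* Assume the random graph $\mathbf{X}$ is governed by an exponential family with countable support $\mathbb{X}$ that satisfies local dependence, as described in the context. Let $f:\mathbb{X}\times\mathbb{Z}\to\mathbb{R}$ be such that, for each $\mathbf{z}$, $f(\cdot\,;\mathbf{z})$ depends only on the within-neighborhood edge variables $(X_{i,j})_{i<j:\,\mathbf{z}_i=\mathbf{z}_j}$. Assume $f$ is Lipschitz with respect to the Hamming metric $d$ with Lipschitz coefficient $\|f\|_{\mathrm{Lip}}>0$, and that $\mathbb{E}\,f(\mathbf{X};\mathbf{z})<\infty$. Then there exists $c>0$ such that for all $\mathbf{z}\in\mathbb{Z}$, all $n>0$ and all $t>0$, $$\mathbb{P}\left(|f(\mathbf{X};\mathbf{z})-\mathbb{E}\,f(\mathbf{X};\mathbf{z})|\ge t\right) \le 2\exp\left(-\frac{t^2}{c\,K\,n_{\max}(\mathbf{z})^2\,\|\mathscr{A}\|_\infty^4\,\|f\|_{\mathrm{Lip}}^2}\right).$$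
   Context: **Random graph.** Nodes are $\{1,\dots,n\}$. For each $i<j$ there is an undirected edge variable $X_{i,j}$ taking values in a countable set $\mathbb{X}_{i,j}$. Write $\mathbf{X}=(X_{i,j})_{i<j}$ and $\mathbb{X}=\prod_{i<j}\mathbb{X}_{i,j}$. **Exponential family.** The model has $p_{\boldsymbol{\eta}}(\mathbf{x})=\exp(\langle\boldsymbol{\eta},s(\mathbf{x})\rangle-\psi(\boldsymbol{\eta}))$, with the natural parameter $\boldsymbol{\eta}=\boldsymbol{\eta}(\boldsymbol{\theta},\mathbf{z})\in\operatorname{int}(\mathbb{N})$, where $\mathbb{N}=\{\boldsymbol{\eta}:\psi(\boldsymbol{\eta})<\infty\}$. **Neighborhood structures.** A neighborhood structure $\mathbf{z}=(\mathbf{z}_1,\dots,\mathbf{z}_n)\in\mathbb{Z}$ assigns each node to exactly one of $K$ neighborhoods ($z_{i,k}=1$ if node $i$ is in neighborhood $k$, else $0$; $\mathbf{z}_i=\mathbf{z}_j$ means $i$ and $j$ share a neighborhood). $n_{\max}(\mathbf{z})$ is the size of the largest neighborhood under $\mathbf{z}$. **Local dependence.** For every $(\boldsymbol{\theta},\mathbf{z})$, $$p_{\boldsymbol{\eta}(\boldsymbol{\theta},\mathbf{z})}(\mathbf{x})=\prod_{k=1}^K\left[p_{\boldsymbol{\eta}(\boldsymbol{\theta},\mathbf{z})}(\mathbf{x}_{k,k})\prod_{l<k}\prod_{i,j:\,z_{i,k}=1,\,z_{j,l}=1}p_{\boldsymbol{\eta}(\boldsymbol{\theta},\mathbf{z})}(x_{i,j})\right],$$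 where $\mathbf{x}_{k,k}$ is the within-neighborhood subgraph of neighborhood $k$. **Data-generating model.** $\mathbb{P}$ and $\mathbb{E}$ are taken under the data-generating parameter $\boldsymbol{\eta}(\boldsymbol{\theta}^\star,\mathbf{z}^\star)$. The data-generating neighborhoods are $\mathscr{A}_1,\dots,\mathscr{A}_K$, and $\|\mathscr{A}\|_\infty=\max_k|\mathscr{A}_k|$. **Hamming metric and Lipschitz coefficient.** $d(\mathbf{x}_1,\mathbf{x}_2)=\sum_{i<j}\mathbb{1}\{x_{1,i,j}\ne x_{2,i,j}\}$. The Lipschitz coefficient is $$\|f\|_{\mathrm{Lip}}=\sup_{d(\mathbf{x}_1,\mathbf{x}_2)>0}\frac{|f(\mathbf{x}_1;\mathbf{z})-f(\mathbf{x}_2;\mathbf{z})|}{d(\mathbf{x}_1,\mathbf{x}_2)}.$$ *)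

theory Defs
  imports "HOL-Probability.Probability"
begin

text \<open>Nodes are 1..n; edge variables are indexed by pairs (i,j) with 1 <= i < j <= n.
  A graph is a function from edge indices to values, fixed to undefined off the edge set.\<close>

definition edges :: "nat \<Rightarrow> (nat \<times> nat) set" where
  "edges n = {(i, j). 1 \<le> i \<and> i < j \<and> j \<le> n}"

definition sample_space :: "nat \<Rightarrow> (nat \<times> nat \<Rightarrow> 'v set) \<Rightarrow> (nat \<times> nat \<Rightarrow> 'v) set" where
  "sample_space n Xs = PiE (edges n) Xs"

definition hamming :: "nat \<Rightarrow> (nat \<times> nat \<Rightarrow> 'v) \<Rightarrow> (nat \<times> nat \<Rightarrow> 'v) \<Rightarrow> nat" where
  "hamming n x1 x2 = card {e \<in> edges n. x1 e \<noteq> x2 e}"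

definition nbhd_structs :: "nat \<Rightarrow> nat \<Rightarrow> (nat \<Rightarrow> nat) set" where
  "nbhd_structs n K = {z. \<forall>i \<in> {1..n}. z i < K}"

text \<open>Size of the largest neighborhood (n_max(z), and also the norm of the partition).\<close>
definition nmax :: "nat \<Rightarrow> nat \<Rightarrow> (nat \<Rightarrow> nat) \<Rightarrow> nat" where
  "nmax n K z = Max ((\<lambda>k. card {i \<in> {1..n}. z i = k}) ` {..<K})"

definition lip_coeff :: "nat \<Rightarrow> (nat \<times> nat \<Rightarrow> 'v set) \<Rightarrow> ((nat \<times> nat \<Rightarrow> 'v) \<Rightarrow> 'z \<Rightarrow> real) \<Rightarrow> 'z \<Rightarrow> real set" where
  "lip_coeff n Xs f z = {\<bar>f x1 z - f x2 z\<bar> / real (hamming n x1 x2) | x1 x2.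
      x1 \<in> sample_space n Xs \<and> x2 \<in> sample_space n Xs \<and> hamming n x1 x2 > 0}"

definition lip :: "nat \<Rightarrow> (nat \<times> nat \<Rightarrow> 'v set) \<Rightarrow> ((nat \<times> nat \<Rightarrow> 'v) \<Rightarrow> 'z \<Rightarrow> real) \<Rightarrow> 'z \<Rightarrow> real" where
  "lip n Xs f z = Sup (lip_coeff n Xs f z)"

text \<open>Exponential family on the sample space with d-dimensional natural parameter
  (vectors in R^d represented as functions nat => real vanishing from d on),
  with natural parameter in the interior of the natural parameter space.\<close>
definition inner_d :: "nat \<Rightarrow> (nat \<Rightarrow> real) \<Rightarrow> (nat \<Rightarrow> real) \<Rightarrow> real" where
  "inner_d d a b = (\<Sum>k<d. a k * b k)"

definition nat_param_space :: "nat \<Rightarrow> ('x \<Rightarrow> nat \<Rightarrow> real) \<Rightarrow> 'x set \<Rightarrow> (nat \<Rightarrow> real) set" where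
  "nat_param_space d s X = {\<eta>. (\<forall>k\<ge>d. \<eta> k = 0) \<and> (\<lambda>x. exp (inner_d d \<eta> (s x))) summable_on X}"

definition in_interior_d :: "nat \<Rightarrow> (nat \<Rightarrow> real) \<Rightarrow> (nat \<Rightarrow> real) set \<Rightarrow> bool" where
  "in_interior_d d \<eta> N \<longleftrightarrow> (\<exists>\<epsilon>>0. \<forall>\<eta>'. (\<forall>k\<ge>d. \<eta>' k = 0) \<and> (\<forall>k<d. \<bar>\<eta>' k - \<eta> k\<bar> < \<epsilon>) \<longrightarrow> \<eta>' \<in> N)"

definition exp_family :: "('x pmf) \<Rightarrow> 'x set \<Rightarrow> bool" where
  "exp_family p X \<longleftrightarrow> set_pmf p \<subseteq> X \<and>
     (\<exists>d (s :: 'x \<Rightarrow> nat \<Rightarrow> real) \<eta>. (\<forall>k\<ge>d. \<eta> k = 0) \<and>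
        in_interior_d d \<eta> (nat_param_space d s X) \<and>
        (\<forall>x\<in>X. pmf p x = exp (inner_d d \<eta> (s x) -
              ln (infsum (\<lambda>y. exp (inner_d d \<eta> (s y))) X))))"

definition marg :: "((nat \<times> nat \<Rightarrow> 'v) pmf) \<Rightarrow> (nat \<times> nat) set \<Rightarrow> (nat \<times> nat \<Rightarrow> 'v) \<Rightarrow> real" where
  "marg p S x = measure_pmf.prob p {y. \<forall>e\<in>S. y e = x e}"

definition within_edges :: "nat \<Rightarrow> (nat \<Rightarrow> nat) \<Rightarrow> nat \<Rightarrow> (nat \<times> nat) set" where
  "within_edges n zs k = {(i, j) \<in> edges n. zs i = k \<and> zs j = k}"

definition between_edges :: "nat \<Rightarrow> (nat \<Rightarrow> nat) \<Rightarrow> (nat \<times> nat) set" where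
  "between_edges n zs = {(i, j) \<in> edges n. zs i \<noteq> zs j}"

definition local_dependence ::
  "nat \<Rightarrow> nat \<Rightarrow> (nat \<times> nat \<Rightarrow> 'v set) \<Rightarrow> (nat \<Rightarrow> nat) \<Rightarrow> ((nat \<times> nat \<Rightarrow> 'v) pmf) \<Rightarrow> bool" where
  "local_dependence n K Xs zs p \<longleftrightarrow>
     (\<forall>x \<in> sample_space n Xs. pmf p x =
        (\<Prod>k<K. marg p (within_edges n zs k) x) * (\<Prod>e\<in>between_edges n zs. marg p {e} x))"

definition depends_within :: "nat \<Rightarrow> ((nat \<times> nat \<Rightarrow> 'v) \<Rightarrow> (nat \<Rightarrow> nat) \<Rightarrow> real) \<Rightarrow> (nat \<Rightarrow> nat) \<Rightarrow> bool" where
  "depends_within n f z \<longleftrightarrow>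
     (\<forall>x y. (\<forall>(i, j) \<in> edges n. z i = z j \<longrightarrow> x (i, j) = y (i, j)) \<longrightarrow> f x z = f y z)"

end

theory Submission
  imports Defs
begin

text \<open>Local dependence says that the law of the graph is the image, under gluing, of the
  product of its block marginals, the blocks being the within-neighbourhood subgraphs of the
  data-generating neighbourhoods and the single edges between them. On this product space f is a
  function of independent coordinates, and resampling a block b changes it by at most
  \<open>c b = lip f * card (b \<inter> E)\<close>, where E is the set of within-neighbourhood edges under z.
  McDiarmid's bounded-differences inequality therefore applies, and
  \<open>\<Sum>b. (c b)\<^sup>2 \<le> lip f\<^sup>2 * nmax(zstar)\<^sup>2 * card E \<le> lip f\<^sup>2 * nmax(zstar)\<^sup>2 * K * nmax(z)\<^sup>2\<close>,
  because every block has at most \<open>nmax(zstar)\<^sup>2\<close> edges and the blocks are disjoint.\<close>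

lemma integrable_measure_pmf_bounded:
  fixes f :: "'a \<Rightarrow> real"
  assumes "\<And>x. x \<in> set_pmf p \<Longrightarrow> \<bar>f x\<bar> \<le> B"
  shows "integrable (measure_pmf p) f"
  by (rule measure_pmf.integrable_const_bound[where B=B]) (auto intro!: AE_pmfI assms)

lemma abs_expectation_diff_le:
  fixes u v :: "'a \<Rightarrow> real"
  assumes "\<And>x. x \<in> set_pmf p \<Longrightarrow> \<bar>u x\<bar> \<le> M" "\<And>x. x \<in> set_pmf p \<Longrightarrow> \<bar>v x\<bar> \<le> M"
    and diff: "\<And>x. x \<in> set_pmf p \<Longrightarrow> \<bar>u x - v x\<bar> \<le> c"
  shows "\<bar>measure_pmf.expectation p u - measure_pmf.expectation p v\<bar> \<le> c"
proof -
  have int: "integrable p u" "integrable p v"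
    using assms(1,2) by (blast intro: integrable_measure_pmf_bounded)+
  then have "\<bar>measure_pmf.expectation p u - measure_pmf.expectation p v\<bar>
      = \<bar>measure_pmf.expectation p (\<lambda>x. u x - v x)\<bar>" by simp
  also have "\<dots> \<le> measure_pmf.expectation p (\<lambda>x. \<bar>u x - v x\<bar>)"
    by (rule integral_abs_bound)
  also have "\<dots> \<le> measure_pmf.expectation p (\<lambda>x. c)"
    using int by (intro integral_mono_AE AE_pmfI diff) auto
  finally show ?thesis by (simp add: measure_pmf.prob_space)
qed

lemma expectation_pair_pmf_bounded:
  fixes F :: "'a \<times> 'b \<Rightarrow> real"
  assumes bnd: "\<And>y w. y \<in> set_pmf Q \<Longrightarrow> w \<in> set_pmf P \<Longrightarrow> \<bar>F (y, w)\<bar> \<le> B"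
  shows "measure_pmf.expectation (pair_pmf Q P) F
       = measure_pmf.expectation Q (\<lambda>y. measure_pmf.expectation P (\<lambda>w. F (y, w)))"
proof -
  \<comment> \<open>Clipping F to [-|B|, |B|] changes nothing on the support but makes it globally bounded,
      as the Fubini rule for bind requires.\<close>
  define F' where "F' = (\<lambda>x. max (- \<bar>B\<bar>) (min \<bar>B\<bar> (F x)))"
  have agree: "F' (y, w) = F (y, w)" if "y \<in> set_pmf Q" "w \<in> set_pmf P" for y w
    using bnd[OF that] by (auto simp: F'_def)
  have "measure_pmf.expectation (pair_pmf Q P) F = measure_pmf.expectation (pair_pmf Q P) F'"
    by (intro integral_cong_AE AE_pmfI) (auto simp: agree)
  also have "\<dots> = measure_pmf.expectation Q (\<lambda>y. measure_pmf.expectation (map_pmf (Pair y) P) F')"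
    unfolding pair_pmf_def measure_pmf_bind map_pmf_def[symmetric]
    by (rule integral_bind[where K="count_space UNIV" and B="\<bar>B\<bar>" and B'=1])
       (auto simp: F'_def measure_pmf_in_subprob_algebra measure_pmf.emeasure_space_1
             intro: measure_pmf.finite_measure)
  also have "\<dots> = measure_pmf.expectation Q (\<lambda>y. measure_pmf.expectation P (\<lambda>w. F (y, w)))"
    by (intro integral_cong_AE AE_pmfI) (auto simp: agree intro!: integral_cong_AE AE_pmfI)
  finally show ?thesis .
qed

lemma Hoeffdings_lemma_pmf:
  fixes h :: "'a \<Rightarrow> real"
  assumes "l > 0" and range: "\<And>y. y \<in> set_pmf Q \<Longrightarrow> \<bar>h y - a\<bar> \<le> c"
  shows "(\<integral>\<^sup>+y. ennreal (exp (l * (h y - measure_pmf.expectation Q h))) \<partial>Q)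
           \<le> ennreal (exp (l\<^sup>2 * c\<^sup>2 / 2))"
proof -
  interpret interval_bounded_random_variable "measure_pmf Q" h "a - c" "a + c"
    by unfold_locales (auto intro!: AE_pmfI dest!: range)
  have "l\<^sup>2 * ((a + c) - (a - c))\<^sup>2 / 8 = l\<^sup>2 * c\<^sup>2 / 2"
    by (simp add: power2_eq_square algebra_simps)
  then show ?thesis using Hoeffdings_lemma_nn_integral[OF assms(1)] by (simp add: mult.commute)
qed

lemma nn_integral_exp_pair_pmf_le:
  fixes F :: "'a \<times> 'b \<Rightarrow> real" and h :: "'a \<Rightarrow> real" and Q :: "'a pmf" and P :: "'b pmf"
  assumes outer: "(\<integral>\<^sup>+y. ennreal (exp (l * (h y - \<mu>))) \<partial>Q) \<le> A"
    and inner: "\<And>y. y \<in> set_pmf Q \<Longrightarrow> (\<integral>\<^sup>+w. ennreal (exp (l * (F (y, w) - h y))) \<partial>P) \<le> B"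
  shows "(\<integral>\<^sup>+x. ennreal (exp (l * (F x - \<mu>))) \<partial>pair_pmf Q P) \<le> A * B"
proof -
  have "(\<integral>\<^sup>+x. ennreal (exp (l * (F x - \<mu>))) \<partial>pair_pmf Q P)
      = (\<integral>\<^sup>+y. \<integral>\<^sup>+w. ennreal (exp (l * (h y - \<mu>))) * ennreal (exp (l * (F (y, w) - h y))) \<partial>P \<partial>Q)"
    by (simp add: nn_integral_pair_pmf' ennreal_mult[symmetric] exp_add[symmetric] algebra_simps)
  also have "\<dots> = (\<integral>\<^sup>+y. ennreal (exp (l * (h y - \<mu>)))
                          * (\<integral>\<^sup>+w. ennreal (exp (l * (F (y, w) - h y))) \<partial>P) \<partial>Q)"
    by (simp add: nn_integral_cmult)
  also have "\<dots> \<le> (\<integral>\<^sup>+y. ennreal (exp (l * (h y - \<mu>))) * B \<partial>Q)"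
    by (intro nn_integral_mono_AE AE_pmfI mult_left_mono inner) auto
  also have "\<dots> = (\<integral>\<^sup>+y. ennreal (exp (l * (h y - \<mu>))) \<partial>Q) * B"
    by (rule nn_integral_multc) simp
  also have "\<dots> \<le> A * B"
    by (intro mult_right_mono outer) auto
  finally show ?thesis .
qed

lemma McDiarmid_nn_integral_exp_le:
  fixes g :: "('j \<Rightarrow> 'b) \<Rightarrow> real" and c :: "'j \<Rightarrow> real"
  assumes "finite J" "l > 0"
    and "\<And>x. x \<in> set_pmf (Pi_pmf J d q) \<Longrightarrow> \<bar>g x\<bar> \<le> M"
    and "\<And>j x y. j \<in> J \<Longrightarrow> x \<in> set_pmf (Pi_pmf J d q) \<Longrightarrow> y \<in> set_pmf (q j) \<Longrightarrow>
           \<bar>g x - g (x(j := y))\<bar> \<le> c j"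
  shows "(\<integral>\<^sup>+x. ennreal (exp (l * (g x - measure_pmf.expectation (Pi_pmf J d q) g))) \<partial>Pi_pmf J d q)
           \<le> ennreal (exp (l\<^sup>2 * (\<Sum>j\<in>J. (c j)\<^sup>2) / 2))"
  using assms(1,3,4)
proof (induction J arbitrary: g rule: finite_induct)
  case empty
  then show ?case by simp
next
  case (insert j J g)
  define P where "P = Pi_pmf J d q"
  have Pi_insert: "Pi_pmf (insert j J) d q = map_pmf (\<lambda>(y, w). w(j := y)) (pair_pmf (q j) P)"
    unfolding P_def by (rule Pi_pmf_insert[OF insert.hyps])
  have upd_mem: "w(j := y) \<in> set_pmf (Pi_pmf (insert j J) d q)"
    if "w \<in> set_pmf P" "y \<in> set_pmf (q j)" for w y
    using that by (auto simp: Pi_insert)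
  have bnd: "\<bar>g (w(j := y))\<bar> \<le> M" if "w \<in> set_pmf P" "y \<in> set_pmf (q j)" for w y
    using insert.prems(1) upd_mem[OF that] .
  \<comment> \<open>h is the conditional expectation of g given the j-th coordinate: Hoeffding's lemma
      controls h around its mean, the induction hypothesis controls g around h.\<close>
  define h where "h = (\<lambda>y. measure_pmf.expectation P (\<lambda>w. g (w(j := y))))"
  define \<mu> where "\<mu> = measure_pmf.expectation (Pi_pmf (insert j J) d q) g"
  define S where "S = (\<Sum>k\<in>J. (c k)\<^sup>2)"
  have \<mu>: "\<mu> = measure_pmf.expectation (q j) h"
    unfolding \<mu>_def Pi_insert h_def
    by (simp add: expectation_pair_pmf_bounded[where B=M] bnd)
  obtain y0 where y0: "y0 \<in> set_pmf (q j)" using set_pmf_not_empty by fastforce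
  have "\<bar>h y - h y0\<bar> \<le> c j" if y: "y \<in> set_pmf (q j)" for y
    unfolding h_def
  proof (rule abs_expectation_diff_le[where M=M])
    fix w assume w: "w \<in> set_pmf P"
    show "\<bar>g (w(j := y))\<bar> \<le> M" "\<bar>g (w(j := y0))\<bar> \<le> M" using bnd w y y0 by auto
    have "\<bar>g (w(j := y)) - g ((w(j := y))(j := y0))\<bar> \<le> c j"
      by (rule insert.prems(2)[OF _ upd_mem[OF w y] y0]) simp
    then show "\<bar>g (w(j := y)) - g (w(j := y0))\<bar> \<le> c j" by simp
  qed
  then have outer: "(\<integral>\<^sup>+y. ennreal (exp (l * (h y - \<mu>))) \<partial>q j) \<le> ennreal (exp (l\<^sup>2 * (c j)\<^sup>2 / 2))"
    unfolding \<mu> by (rule Hoeffdings_lemma_pmf[OF \<open>l > 0\<close>])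
  have inner: "(\<integral>\<^sup>+w. ennreal (exp (l * (g (w(j := y)) - h y))) \<partial>P) \<le> ennreal (exp (l\<^sup>2 * S / 2))"
    if y: "y \<in> set_pmf (q j)" for y
    unfolding h_def P_def S_def
  proof (rule insert.IH)
    fix k x y' assume k: "k \<in> J" and x: "x \<in> set_pmf (Pi_pmf J d q)" and y': "y' \<in> set_pmf (q k)"
    have "k \<noteq> j" using k insert.hyps by auto
    then have "(x(k := y'))(j := y) = (x(j := y))(k := y')" by (rule fun_upd_twist)
    moreover have "\<bar>g (x(j := y)) - g ((x(j := y))(k := y'))\<bar> \<le> c k"
      using k x y' by (intro insert.prems(2) upd_mem y) (simp_all add: P_def)
    ultimately show "\<bar>g (x(j := y)) - g ((x(k := y'))(j := y))\<bar> \<le> c k" by simp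
  qed (use bnd y in \<open>auto simp: P_def fun_upd_def\<close>)
  have "(\<integral>\<^sup>+x. ennreal (exp (l * (g x - \<mu>))) \<partial>Pi_pmf (insert j J) d q)
      = (\<integral>\<^sup>+x. ennreal (exp (l * (g ((snd x)(j := fst x)) - \<mu>))) \<partial>pair_pmf (q j) P)"
    by (simp add: Pi_insert case_prod_unfold)
  also have "\<dots> \<le> ennreal (exp (l\<^sup>2 * (c j)\<^sup>2 / 2)) * ennreal (exp (l\<^sup>2 * S / 2))"
    by (rule nn_integral_exp_pair_pmf_le[OF outer]) (simp add: inner)
  also have "\<dots> = ennreal (exp (l\<^sup>2 * (\<Sum>k\<in>insert j J. (c k)\<^sup>2) / 2))"
    using insert.hyps
    by (simp add: S_def ennreal_mult[symmetric] exp_add[symmetric] add_divide_distrib distrib_left)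
  finally show ?case by (simp add: \<mu>_def)
qed

lemma McDiarmid_ineq_ge:
  fixes g :: "('j \<Rightarrow> 'b) \<Rightarrow> real" and c :: "'j \<Rightarrow> real"
  assumes "finite J" "(\<Sum>j\<in>J. (c j)\<^sup>2) \<le> S" "S > 0" "t > 0"
    and "\<And>x. x \<in> set_pmf (Pi_pmf J d q) \<Longrightarrow> \<bar>g x\<bar> \<le> M"
    and "\<And>j x y. j \<in> J \<Longrightarrow> x \<in> set_pmf (Pi_pmf J d q) \<Longrightarrow> y \<in> set_pmf (q j) \<Longrightarrow>
           \<bar>g x - g (x(j := y))\<bar> \<le> c j"
  shows "measure_pmf.prob (Pi_pmf J d q) {x. g x - measure_pmf.expectation (Pi_pmf J d q) g \<ge> t}
           \<le> exp (- (t\<^sup>2 / (2 * S)))"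
proof -
  define P where "P = Pi_pmf J d q"
  define \<mu> where "\<mu> = measure_pmf.expectation P g"
  define l where "l = t / S"
  have "l > 0" using assms(3,4) by (simp add: l_def)
  have "ennreal (measure_pmf.prob P {x. g x - \<mu> \<ge> t}) = (\<integral>\<^sup>+x. indicator {x. g x - \<mu> \<ge> t} x \<partial>P)"
    by (simp add: measure_pmf.emeasure_eq_measure)
  also have "\<dots> \<le> (\<integral>\<^sup>+x. ennreal (exp (- l * t)) * ennreal (exp (l * (g x - \<mu>))) \<partial>P)"
  proof (intro nn_integral_mono)
    fix x
    have "1 \<le> exp (- l * t) * exp (l * (g x - \<mu>))" if "t \<le> g x - \<mu>"
      using that \<open>l > 0\<close> by (simp add: exp_add[symmetric])
    then show "indicator {x. g x - \<mu> \<ge> t} x \<le> ennreal (exp (- l * t)) * ennreal (exp (l * (g x - \<mu>)))"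
      by (auto simp: indicator_def ennreal_mult[symmetric])
  qed
  also have "\<dots> = ennreal (exp (- l * t)) * (\<integral>\<^sup>+x. ennreal (exp (l * (g x - \<mu>))) \<partial>P)"
    by (rule nn_integral_cmult) simp
  also have "\<dots> \<le> ennreal (exp (- l * t)) * ennreal (exp (l\<^sup>2 * (\<Sum>j\<in>J. (c j)\<^sup>2) / 2))"
    unfolding P_def \<mu>_def
    by (intro mult_left_mono McDiarmid_nn_integral_exp_le[OF assms(1) \<open>l > 0\<close> assms(5,6)]) auto
  also have "\<dots> \<le> ennreal (exp (- l * t)) * ennreal (exp (l\<^sup>2 * S / 2))"
    using assms(2) by (intro mult_left_mono ennreal_leI) (auto intro!: divide_right_mono mult_left_mono)
  also have "\<dots> = ennreal (exp (- (t\<^sup>2 / (2 * S))))"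
  proof -
    have "- l * t + l\<^sup>2 * S / 2 = - (t\<^sup>2 / (2 * S))"
      using assms(3) by (simp add: l_def power2_eq_square field_simps)
    then show ?thesis by (simp add: ennreal_mult[symmetric] exp_add[symmetric])
  qed
  finally show ?thesis by (simp add: P_def \<mu>_def)
qed

lemma McDiarmid_ineq_abs_ge:
  fixes g :: "('j \<Rightarrow> 'b) \<Rightarrow> real" and c :: "'j \<Rightarrow> real"
  assumes "finite J" "(\<Sum>j\<in>J. (c j)\<^sup>2) \<le> S" "S > 0" "t > 0"
    and bnd: "\<And>x. x \<in> set_pmf (Pi_pmf J d q) \<Longrightarrow> \<bar>g x\<bar> \<le> M"
    and dif: "\<And>j x y. j \<in> J \<Longrightarrow> x \<in> set_pmf (Pi_pmf J d q) \<Longrightarrow> y \<in> set_pmf (q j) \<Longrightarrow>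
           \<bar>g x - g (x(j := y))\<bar> \<le> c j"
  shows "measure_pmf.prob (Pi_pmf J d q) {x. \<bar>g x - measure_pmf.expectation (Pi_pmf J d q) g\<bar> \<ge> t}
           \<le> 2 * exp (- (t\<^sup>2 / (2 * S)))"
proof -
  define P where "P = Pi_pmf J d q"
  define \<mu> where "\<mu> = measure_pmf.expectation P g"
  have upper: "measure_pmf.prob P {x. g x - \<mu> \<ge> t} \<le> exp (- (t\<^sup>2 / (2 * S)))"
    unfolding P_def \<mu>_def by (rule McDiarmid_ineq_ge[OF assms])
  have "measure_pmf.prob P {x. - g x - measure_pmf.expectation P (\<lambda>x. - g x) \<ge> t}
      \<le> exp (- (t\<^sup>2 / (2 * S)))"
    unfolding P_def by (rule McDiarmid_ineq_ge[OF assms(1-4), where M=M]) (use bnd dif in force)+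
  then have lower: "measure_pmf.prob P {x. \<mu> - g x \<ge> t} \<le> exp (- (t\<^sup>2 / (2 * S)))"
    by (simp add: \<mu>_def)
  have "measure_pmf.prob P {x. \<bar>g x - \<mu>\<bar> \<ge> t}
      \<le> measure_pmf.prob P ({x. g x - \<mu> \<ge> t} \<union> {x. \<mu> - g x \<ge> t})"
    by (intro measure_pmf.finite_measure_mono) auto
  also have "\<dots> \<le> measure_pmf.prob P {x. g x - \<mu> \<ge> t} + measure_pmf.prob P {x. \<mu> - g x \<ge> t}"
    by (rule measure_Un_le) auto
  finally show ?thesis using upper lower by (simp add: P_def \<mu>_def)
qed

text \<open>Blocks are indexed by \<open>Inl k\<close> for the subgraph within neighbourhood k and by
  \<open>Inr e\<close> for a single edge e between neighbourhoods.\<close>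

definition blocks :: "nat \<Rightarrow> nat \<Rightarrow> (nat \<Rightarrow> nat) \<Rightarrow> (nat + nat \<times> nat) set" where
  "blocks n K zs = Inl ` {..<K} \<union> Inr ` between_edges n zs"

definition block :: "nat \<Rightarrow> (nat \<Rightarrow> nat) \<Rightarrow> nat + nat \<times> nat \<Rightarrow> (nat \<times> nat) set" where
  "block n zs b = (case b of Inl k \<Rightarrow> within_edges n zs k | Inr e \<Rightarrow> {e})"

definition block_of :: "nat \<Rightarrow> (nat \<Rightarrow> nat) \<Rightarrow> nat \<times> nat \<Rightarrow> nat + nat \<times> nat" where
  "block_of n zs e = (if e \<in> between_edges n zs then Inr e else Inl (zs (fst e)))"

definition split_blocks ::
  "nat \<Rightarrow> nat \<Rightarrow> (nat \<Rightarrow> nat) \<Rightarrow> (nat \<times> nat \<Rightarrow> 'v) \<Rightarrow> nat + nat \<times> nat \<Rightarrow> nat \<times> nat \<Rightarrow> 'v" where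
  "split_blocks n K zs x =
     (\<lambda>b. if b \<in> blocks n K zs then restrict x (block n zs b) else (\<lambda>_. undefined))"

definition merge_blocks ::
  "nat \<Rightarrow> (nat \<Rightarrow> nat) \<Rightarrow> (nat + nat \<times> nat \<Rightarrow> nat \<times> nat \<Rightarrow> 'v) \<Rightarrow> nat \<times> nat \<Rightarrow> 'v" where
  "merge_blocks n zs w = (\<lambda>e. if e \<in> edges n then w (block_of n zs e) e else undefined)"

lemma finite_edges: "finite (edges n)"
  by (rule finite_subset[of _ "{1..n} \<times> {1..n}"]) (auto simp: edges_def)

lemma finite_between_edges: "finite (between_edges n zs)"
  by (rule finite_subset[OF _ finite_edges]) (auto simp: between_edges_def)

lemma finite_blocks: "finite (blocks n K zs)"
  by (simp add: blocks_def finite_between_edges)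

lemma block_subset_edges: "b \<in> blocks n K zs \<Longrightarrow> block n zs b \<subseteq> edges n"
  by (auto simp: block_def blocks_def within_edges_def between_edges_def)

lemma block_of_in_blocks:
  assumes "zs \<in> nbhd_structs n K" "e \<in> edges n"
  shows "block_of n zs e \<in> blocks n K zs" and "e \<in> block n zs (block_of n zs e)"
proof -
  obtain i j where e: "e = (i, j)" "1 \<le> i" "i \<le> n" using assms(2) by (auto simp: edges_def)
  then have "zs i < K" using assms(1) by (auto simp: nbhd_structs_def)
  then show "block_of n zs e \<in> blocks n K zs" "e \<in> block n zs (block_of n zs e)"
    using assms(2) e
    by (auto simp: block_of_def blocks_def block_def within_edges_def between_edges_def)
qed

lemma block_of_eq: "b \<in> blocks n K zs \<Longrightarrow> e \<in> block n zs b \<Longrightarrow> block_of n zs e = b"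
  by (auto simp: block_of_def blocks_def block_def within_edges_def between_edges_def)

lemma disjoint_blocks:
  "b \<in> blocks n K zs \<Longrightarrow> b' \<in> blocks n K zs \<Longrightarrow> b \<noteq> b' \<Longrightarrow> block n zs b \<inter> block n zs b' = {}"
  using block_of_eq by blast

lemma merge_split_blocks:
  assumes "zs \<in> nbhd_structs n K" "x \<in> sample_space n Xs"
  shows "merge_blocks n zs (split_blocks n K zs x) = x"
proof
  fix e
  show "merge_blocks n zs (split_blocks n K zs x) e = x e"
  proof (cases "e \<in> edges n")
    case True
    then show ?thesis
      using block_of_in_blocks[OF assms(1) True] by (simp add: merge_blocks_def split_blocks_def)
  next
    case False
    then show ?thesis
      using PiE_arb[OF assms(2)[unfolded sample_space_def] False] by (simp add: merge_blocks_def)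
  qed
qed

lemma split_merge_blocks:
  assumes "\<And>b. b \<in> blocks n K zs \<Longrightarrow> w b \<in> extensional (block n zs b)"
    and "\<And>b. b \<notin> blocks n K zs \<Longrightarrow> w b = (\<lambda>_. undefined)"
  shows "split_blocks n K zs (merge_blocks n zs w) = w"
proof (intro ext)
  fix b e
  show "split_blocks n K zs (merge_blocks n zs w) b e = w b e"
    using assms(2) block_subset_edges[of b n K zs] block_of_eq[of b n K zs e] extensional_arb[OF assms(1)]
    by (auto simp: split_blocks_def merge_blocks_def)
qed

lemma merge_blocks_in_sample_space:
  assumes "zs \<in> nbhd_structs n K"
    and "\<And>b. b \<in> blocks n K zs \<Longrightarrow> \<exists>x \<in> sample_space n Xs. \<forall>e \<in> block n zs b. w b e = x e"
  shows "merge_blocks n zs w \<in> sample_space n Xs"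
  unfolding sample_space_def
proof (rule PiE_I)
  fix e assume e: "e \<in> edges n"
  obtain x where "x \<in> sample_space n Xs" "w (block_of n zs e) e = x e"
    using assms(2)[OF block_of_in_blocks(1)[OF assms(1) e]] block_of_in_blocks(2)[OF assms(1) e]
    by blast
  then show "merge_blocks n zs w e \<in> Xs e"
    using e by (auto simp: merge_blocks_def sample_space_def)
qed (simp add: merge_blocks_def)

lemma split_blocks_update:
  assumes "b \<in> blocks n K zs"
  shows "(split_blocks n K zs x)(b := restrict x' (block n zs b))
       = split_blocks n K zs (\<lambda>e. if e \<in> block n zs b then x' e else x e)"
proof (intro ext)
  fix b' e
  show "((split_blocks n K zs x)(b := restrict x' (block n zs b))) b' e
      = split_blocks n K zs (\<lambda>e. if e \<in> block n zs b then x' e else x e) b' e"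
  proof (cases "b' = b")
    case False
    then have "e \<in> block n zs b' \<Longrightarrow> e \<notin> block n zs b" if "b' \<in> blocks n K zs"
      using disjoint_blocks[OF assms that] by blast
    then show ?thesis using False by (simp add: split_blocks_def)
  qed (use assms in \<open>simp add: split_blocks_def\<close>)
qed

lemma pmf_map_inj_on_superset:
  assumes "inj_on f A" "set_pmf M \<subseteq> A" "x \<in> A"
  shows "pmf (map_pmf f M) (f x) = pmf M x"
proof (cases "x \<in> set_pmf M")
  case True
  then show ?thesis by (intro pmf_map_inj inj_on_subset[OF assms(1,2)])
next
  case False
  then have "f x \<notin> f ` set_pmf M" using assms by (auto dest: inj_onD)
  then show ?thesis using False by (simp add: pmf_map_outside set_pmf_iff)
qed

lemma pmf_map_restrict: "pmf (map_pmf (\<lambda>x. restrict x A) p) (restrict x A) = marg p A x"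
proof -
  have "(\<lambda>x. restrict x A) -` {restrict x A} = {y. \<forall>e\<in>A. y e = x e}"
    by (auto simp: fun_eq_iff restrict_def) metis
  then show ?thesis by (simp add: pmf_map marg_def)
qed

lemma prod_marg_blocks:
  "(\<Prod>b\<in>blocks n K zs. marg p (block n zs b) x)
     = (\<Prod>k<K. marg p (within_edges n zs k) x) * (\<Prod>e\<in>between_edges n zs. marg p {e} x)"
proof -
  have "(\<Prod>b\<in>blocks n K zs. marg p (block n zs b) x)
      = (\<Prod>b\<in>Inl ` {..<K}. marg p (block n zs b) x) * (\<Prod>b\<in>Inr ` between_edges n zs. marg p (block n zs b) x)"
    unfolding blocks_def by (rule prod.union_disjoint) (auto simp: finite_between_edges)
  then show ?thesis by (simp add: prod.reindex block_def)
qed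

definition block_product ::
  "(nat \<times> nat \<Rightarrow> 'v) pmf \<Rightarrow> nat \<Rightarrow> nat \<Rightarrow> (nat \<Rightarrow> nat) \<Rightarrow> (nat + nat \<times> nat \<Rightarrow> nat \<times> nat \<Rightarrow> 'v) pmf" where
  "block_product p n K zs =
     Pi_pmf (blocks n K zs) (\<lambda>_. undefined) (\<lambda>b. map_pmf (\<lambda>x. restrict x (block n zs b)) p)"

lemma pmf_block_product_split_blocks:
  assumes "x \<in> sample_space n Xs" "local_dependence n K Xs zs p"
  shows "pmf (block_product p n K zs) (split_blocks n K zs x) = pmf p x"
proof -
  have "pmf (block_product p n K zs) (split_blocks n K zs x)
      = (\<Prod>b\<in>blocks n K zs. pmf (map_pmf (\<lambda>x. restrict x (block n zs b)) p) (restrict x (block n zs b)))"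
    unfolding block_product_def by (subst pmf_Pi) (auto simp: finite_blocks split_blocks_def)
  also have "\<dots> = pmf p x"
    using assms by (simp add: pmf_map_restrict prod_marg_blocks local_dependence_def)
  finally show ?thesis .
qed

lemma set_pmf_block_product:
  assumes "zs \<in> nbhd_structs n K" "set_pmf p \<subseteq> sample_space n Xs"
  shows "set_pmf (block_product p n K zs) \<subseteq> split_blocks n K zs ` sample_space n Xs"
proof
  fix w assume "w \<in> set_pmf (block_product p n K zs)"
  then have w_blocks: "\<And>b. b \<in> blocks n K zs \<Longrightarrow> \<exists>x \<in> set_pmf p. w b = restrict x (block n zs b)"
    and w_dflt: "\<And>b. b \<notin> blocks n K zs \<Longrightarrow> w b = (\<lambda>_. undefined)"
    by (auto simp: block_product_def set_Pi_pmf finite_blocks PiE_dflt_def)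
  have "split_blocks n K zs (merge_blocks n zs w) = w"
    using w_dflt by (intro split_merge_blocks) (auto dest!: w_blocks)
  moreover have "merge_blocks n zs w \<in> sample_space n Xs"
    using w_blocks assms by (intro merge_blocks_in_sample_space[OF assms(1)]) fastforce
  ultimately show "w \<in> split_blocks n K zs ` sample_space n Xs" by (metis imageI)
qed

lemma map_pmf_split_blocks:
  assumes "zs \<in> nbhd_structs n K" "set_pmf p \<subseteq> sample_space n Xs" "local_dependence n K Xs zs p"
  shows "map_pmf (split_blocks n K zs) p = block_product p n K zs"
proof (rule pmf_eqI)
  fix w
  show "pmf (map_pmf (split_blocks n K zs) p) w = pmf (block_product p n K zs) w"
  proof (cases "w \<in> split_blocks n K zs ` sample_space n Xs")
    case True
    then obtain x where x: "x \<in> sample_space n Xs" and w: "w = split_blocks n K zs x" by blast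
    have "inj_on (split_blocks n K zs) (sample_space n Xs)"
      by (rule inj_on_inverseI[where g = "merge_blocks n zs"]) (rule merge_split_blocks[OF assms(1)])
    then show ?thesis
      using x assms(2,3) by (simp add: w pmf_map_inj_on_superset pmf_block_product_split_blocks)
  next
    case False
    then have "w \<notin> split_blocks n K zs ` set_pmf p" "w \<notin> set_pmf (block_product p n K zs)"
      using assms(2) set_pmf_block_product[OF assms(1,2)] by auto
    then show ?thesis by (simp add: pmf_map_outside set_pmf_iff)
  qed
qed

lemma set_pmf_block_product_eq:
  assumes "zs \<in> nbhd_structs n K" "set_pmf p \<subseteq> sample_space n Xs" "local_dependence n K Xs zs p"
  shows "set_pmf (block_product p n K zs) = split_blocks n K zs ` set_pmf p"
  using map_pmf_split_blocks[OF assms, symmetric] by simp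

lemma map_pmf_merge_block_product:
  assumes "zs \<in> nbhd_structs n K" "set_pmf p \<subseteq> sample_space n Xs" "local_dependence n K Xs zs p"
  shows "map_pmf (merge_blocks n zs) (block_product p n K zs) = p"
  unfolding map_pmf_split_blocks[OF assms, symmetric] map_pmf_comp
  by (rule map_pmf_idI) (use merge_split_blocks[OF assms(1)] assms(2) in blast)

definition same_nbhd_edges :: "nat \<Rightarrow> (nat \<Rightarrow> nat) \<Rightarrow> (nat \<times> nat) set" where
  "same_nbhd_edges n z = {(i, j) \<in> edges n. z i = z j}"

lemma abs_diff_le_lip_card:
  assumes "x1 \<in> sample_space n Xs" "x2 \<in> sample_space n Xs" "D \<subseteq> edges n"
    and agree: "\<And>e. e \<in> edges n \<Longrightarrow> e \<notin> D \<Longrightarrow> x1 e = x2 e"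
    and "depends_within n f z" "bdd_above (lip_coeff n Xs f z)" "0 \<le> lip n Xs f z"
  shows "\<bar>f x1 z - f x2 z\<bar> \<le> lip n Xs f z * card (D \<inter> same_nbhd_edges n z)"
proof -
  \<comment> \<open>Changes of x2 outside the within-neighbourhood edges do not affect f, so x2 can be
      replaced by a configuration differing from x1 only in D \<inter> same_nbhd_edges n z.\<close>
  define y where "y = (\<lambda>e. if e \<in> D - same_nbhd_edges n z then x1 e else x2 e)"
  have "\<forall>(i, j) \<in> edges n. z i = z j \<longrightarrow> y (i, j) = x2 (i, j)"
    by (auto simp: y_def same_nbhd_edges_def)
  then have fy: "f y z = f x2 z"
    using assms(5) unfolding depends_within_def by blast
  have y: "y \<in> sample_space n Xs"
    using assms(1-3) by (auto simp: y_def sample_space_def PiE_def Pi_def extensional_def)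
  have "hamming n x1 y \<le> card (D \<inter> same_nbhd_edges n z)"
    unfolding hamming_def
    by (rule card_mono) (use finite_subset[OF assms(3) finite_edges] agree in \<open>auto simp: y_def\<close>)
  then have bound: "lip n Xs f z * hamming n x1 y \<le> lip n Xs f z * card (D \<inter> same_nbhd_edges n z)"
    using assms(7) by (intro mult_left_mono) auto
  show ?thesis
  proof (cases "hamming n x1 y > 0")
    case True
    then have "\<bar>f x1 z - f y z\<bar> / hamming n x1 y \<in> lip_coeff n Xs f z"
      unfolding lip_coeff_def using assms(1) y by blast
    then have "\<bar>f x1 z - f y z\<bar> / hamming n x1 y \<le> lip n Xs f z"
      unfolding lip_def by (rule cSup_upper[OF _ assms(6)])
    then show ?thesis using True bound fy by (simp add: divide_le_eq mult.commute)
  next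
    case False
    then have "{e \<in> edges n. x1 e \<noteq> y e} = {}"
      using finite_edges by (simp add: hamming_def)
    then have "x1 = y"
      using assms(1) y unfolding sample_space_def by (intro PiE_ext[of x1 "edges n" Xs]) auto
    then show ?thesis using fy assms(7) by simp
  qed
qed

lemma abs_diff_le_lip_block_update:
  assumes "zs \<in> nbhd_structs n K" "b \<in> blocks n K zs" "x \<in> sample_space n Xs" "x' \<in> sample_space n Xs"
    and "depends_within n f z" "bdd_above (lip_coeff n Xs f z)" "0 \<le> lip n Xs f z"
  shows "\<bar>f x z - f (merge_blocks n zs ((split_blocks n K zs x)(b := restrict x' (block n zs b)))) z\<bar>
           \<le> lip n Xs f z * card (block n zs b \<inter> same_nbhd_edges n z)"
proof -
  define x'' where "x'' = (\<lambda>e. if e \<in> block n zs b then x' e else x e)"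
  have "x'' \<in> sample_space n Xs"
    using assms(3,4) block_subset_edges[OF assms(2)]
    by (auto simp: x''_def sample_space_def PiE_def Pi_def extensional_def)
  then have "merge_blocks n zs ((split_blocks n K zs x)(b := restrict x' (block n zs b))) = x''"
    by (simp add: split_blocks_update[OF assms(2)] merge_split_blocks[OF assms(1)] x''_def)
  moreover have "\<bar>f x z - f x'' z\<bar> \<le> lip n Xs f z * card (block n zs b \<inter> same_nbhd_edges n z)"
    using assms(5-7) \<open>x'' \<in> sample_space n Xs\<close>
    by (intro abs_diff_le_lip_card[OF assms(3) _ block_subset_edges[OF assms(2)]]) (auto simp: x''_def)
  ultimately show ?thesis by simp
qed

lemma block_product_bounded_differences:
  assumes zs: "zs \<in> nbhd_structs n K" and supp: "set_pmf p \<subseteq> sample_space n Xs"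
    and ld: "local_dependence n K Xs zs p"
    and f: "depends_within n f z" "bdd_above (lip_coeff n Xs f z)" "0 \<le> lip n Xs f z"
    and b: "b \<in> blocks n K zs" and w: "w \<in> set_pmf (block_product p n K zs)"
    and y: "y \<in> set_pmf (map_pmf (\<lambda>x. restrict x (block n zs b)) p)"
  shows "\<bar>f (merge_blocks n zs w) z - f (merge_blocks n zs (w(b := y))) z\<bar>
           \<le> lip n Xs f z * card (block n zs b \<inter> same_nbhd_edges n z)"
proof -
  obtain x where x: "x \<in> sample_space n Xs" and w: "w = split_blocks n K zs x"
    using w supp unfolding set_pmf_block_product_eq[OF zs supp ld] by blast
  obtain x' where "x' \<in> sample_space n Xs" and y: "y = restrict x' (block n zs b)"
    using y supp by auto
  then show ?thesis
    using abs_diff_le_lip_block_update[OF zs b x _ f] by (simp add: w y merge_split_blocks[OF zs x])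
qed

definition nbhd :: "nat \<Rightarrow> (nat \<Rightarrow> nat) \<Rightarrow> nat \<Rightarrow> nat set" where
  "nbhd n z k = {i \<in> {1..n}. z i = k}"

lemma finite_nbhd: "finite (nbhd n z k)"
  by (simp add: nbhd_def)

lemma card_nbhd_le_nmax: "k < K \<Longrightarrow> card (nbhd n z k) \<le> nmax n K z"
  unfolding nmax_def nbhd_def by (rule Max_ge) auto

lemma nmax_pos:
  assumes "n > 0" "z \<in> nbhd_structs n K"
  shows "0 < K" and "0 < nmax n K z"
proof -
  have "z 1 < K" using assms by (auto simp: nbhd_structs_def)
  moreover have "1 \<in> nbhd n z (z 1)" using assms(1) by (auto simp: nbhd_def)
  then have "0 < card (nbhd n z (z 1))" by (auto simp: nbhd_def card_gt_0_iff)
  ultimately show "0 < K" "0 < nmax n K z" using card_nbhd_le_nmax[of "z 1" K n z] by auto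
qed

lemma card_block_le_nmax:
  assumes "n > 0" "zs \<in> nbhd_structs n K" "b \<in> blocks n K zs"
  shows "card (block n zs b) \<le> nmax n K zs ^ 2"
proof (cases b)
  case (Inl k)
  then have "k < K" "block n zs b \<subseteq> nbhd n zs k \<times> nbhd n zs k"
    using assms(3) by (auto simp: blocks_def block_def within_edges_def edges_def nbhd_def)
  then have "card (block n zs b) \<le> card (nbhd n zs k) * card (nbhd n zs k)"
    by (metis card_cartesian_product card_mono finite_SigmaI finite_nbhd)
  also have "\<dots> \<le> nmax n K zs ^ 2"
    using card_nbhd_le_nmax[OF \<open>k < K\<close>] by (simp add: power2_eq_square mult_mono)
  finally show ?thesis .
next
  case (Inr e)
  then show ?thesis using nmax_pos[OF assms(1,2)] by (simp add: block_def)
qed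

lemma card_same_nbhd_edges_le:
  assumes "z \<in> nbhd_structs n K"
  shows "card (same_nbhd_edges n z) \<le> K * nmax n K z ^ 2"
proof -
  have "same_nbhd_edges n z \<subseteq> (\<Union>k<K. nbhd n z k \<times> nbhd n z k)"
    using assms by (fastforce simp: same_nbhd_edges_def edges_def nbhd_def nbhd_structs_def)
  then have "card (same_nbhd_edges n z) \<le> card (\<Union>k<K. nbhd n z k \<times> nbhd n z k)"
    by (intro card_mono) (auto simp: finite_nbhd)
  also have "\<dots> \<le> (\<Sum>k<K. card (nbhd n z k) * card (nbhd n z k))"
    by (rule order.trans[OF card_UN_le]) (simp_all add: card_cartesian_product)
  also have "\<dots> \<le> (\<Sum>k<K. nmax n K z ^ 2)"
    using card_nbhd_le_nmax by (intro sum_mono) (simp add: power2_eq_square mult_mono)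
  finally show ?thesis by simp
qed

lemma sum_card_block_inter_le:
  assumes "finite R"
  shows "(\<Sum>b\<in>blocks n K zs. card (block n zs b \<inter> R)) \<le> card R"
proof -
  have "(\<Sum>b\<in>blocks n K zs. card (block n zs b \<inter> R)) = card (\<Union>b\<in>blocks n K zs. block n zs b \<inter> R)"
    using disjoint_blocks[of _ n K zs] assms
    by (intro card_UN_disjoint[symmetric]) (auto simp: finite_blocks)
  also have "\<dots> \<le> card R" by (rule card_mono[OF assms]) auto
  finally show ?thesis .
qed

lemma sum_card_block_inter_same_nbhd_le:
  assumes "n > 0" "zs \<in> nbhd_structs n K" "z \<in> nbhd_structs n K"
  shows "(\<Sum>b\<in>blocks n K zs. card (block n zs b \<inter> same_nbhd_edges n z) ^ 2)
           \<le> K * nmax n K z ^ 2 * nmax n K zs ^ 2"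
proof -
  define R where "R = same_nbhd_edges n z"
  have "finite R" unfolding R_def same_nbhd_edges_def
    by (rule finite_subset[OF _ finite_edges]) auto
  have "(\<Sum>b\<in>blocks n K zs. card (block n zs b \<inter> R) ^ 2)
      \<le> (\<Sum>b\<in>blocks n K zs. nmax n K zs ^ 2 * card (block n zs b \<inter> R))"
  proof (intro sum_mono)
    fix b assume "b \<in> blocks n K zs"
    then have "card (block n zs b \<inter> R) \<le> nmax n K zs ^ 2"
      using card_block_le_nmax[OF assms(1,2)] finite_subset[OF block_subset_edges finite_edges]
      by (meson card_mono inf_le1 order_trans)
    then show "card (block n zs b \<inter> R) ^ 2 \<le> nmax n K zs ^ 2 * card (block n zs b \<inter> R)"
      by (simp add: power2_eq_square)
  qed
  also have "\<dots> \<le> nmax n K zs ^ 2 * card R"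
    by (simp add: sum_distrib_left[symmetric] sum_card_block_inter_le[OF \<open>finite R\<close>])
  also have "\<dots> \<le> nmax n K zs ^ 2 * (K * nmax n K z ^ 2)"
    using card_same_nbhd_edges_le[OF assms(3)] by (simp add: R_def)
  finally show ?thesis by (simp add: R_def mult_ac)
qed

lemma concentration_local_dependence:
  fixes f :: "(nat \<times> nat \<Rightarrow> 'v) \<Rightarrow> (nat \<Rightarrow> nat) \<Rightarrow> real"
  assumes n: "n > 0" and supp: "set_pmf p \<subseteq> sample_space n Xs"
    and zs: "zstar \<in> nbhd_structs n K" and ld: "local_dependence n K Xs zstar p"
    and f: "depends_within n f z" "bdd_above (lip_coeff n Xs f z)" "lip n Xs f z > 0"
    and z: "z \<in> nbhd_structs n K" and t: "t > 0"
  shows "measure_pmf.prob p {x. \<bar>f x z - measure_pmf.expectation p (\<lambda>y. f y z)\<bar> \<ge> t}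
           \<le> 2 * exp (- (t^2 / (2 * real K * real (nmax n K z)^2 * real (nmax n K zstar)^4
                                  * (lip n Xs f z)^2)))"
proof -
  define L where "L = lip n Xs f z"
  define P where "P = block_product p n K zstar"
  define G where "G = (\<lambda>w. f (merge_blocks n zstar w) z)"
  define c where "c = (\<lambda>b. L * card (block n zstar b \<inter> same_nbhd_edges n z))"
  define S where "S = L^2 * real K * real (nmax n K z)^2 * real (nmax n K zstar)^4"
  obtain x0 where x0: "x0 \<in> set_pmf p" using set_pmf_not_empty by fastforce
  have bnd: "\<bar>G w\<bar> \<le> \<bar>f x0 z\<bar> + L * card (edges n)" if w: "w \<in> set_pmf P" for w
  proof -
    have "merge_blocks n zstar w \<in> set_pmf p"
      using w map_pmf_merge_block_product[OF zs supp ld] unfolding P_def by (metis pmf.set_map imageI)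
    then have "\<bar>G w - f x0 z\<bar> \<le> L * card (edges n \<inter> same_nbhd_edges n z)"
      unfolding L_def G_def using x0 supp f by (intro abs_diff_le_lip_card) auto
    also have "\<dots> \<le> L * card (edges n)"
      using f(3) by (intro mult_left_mono) (auto simp: L_def card_mono finite_edges)
    finally show ?thesis by simp
  qed
  have K: "0 < K" and a: "0 < nmax n K z" and b: "0 < nmax n K zstar"
    using nmax_pos[OF n z] nmax_pos[OF n zs] by auto
  have sum_c: "(\<Sum>b\<in>blocks n K zstar. (c b)\<^sup>2) \<le> S"
  proof -
    have "(\<Sum>b\<in>blocks n K zstar. (c b)\<^sup>2)
        = L^2 * real (\<Sum>b\<in>blocks n K zstar. card (block n zstar b \<inter> same_nbhd_edges n z) ^ 2)"
      by (simp add: c_def power_mult_distrib sum_distrib_left)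
    also have "\<dots> \<le> L^2 * real (K * nmax n K z ^ 2 * nmax n K zstar ^ 4)"
    proof -
      have "nmax n K zstar ^ 2 \<le> nmax n K zstar ^ 4" using b by (intro power_increasing) auto
      then have "(\<Sum>b\<in>blocks n K zstar. card (block n zstar b \<inter> same_nbhd_edges n z) ^ 2)
          \<le> K * nmax n K z ^ 2 * nmax n K zstar ^ 4"
        using sum_card_block_inter_same_nbhd_le[OF n zs z] order.trans mult_le_mono2 by blast
      then show ?thesis by (intro mult_left_mono of_nat_mono) simp_all
    qed
    also have "\<dots> = S" by (simp add: S_def)
    finally show ?thesis .
  qed
  have "S > 0" using K a b f(3) by (simp add: S_def L_def)
  have "measure_pmf.prob P {w. \<bar>G w - measure_pmf.expectation P G\<bar> \<ge> t} \<le> 2 * exp (- (t\<^sup>2 / (2 * S)))"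
    unfolding P_def block_product_def
  proof (rule McDiarmid_ineq_abs_ge[OF finite_blocks sum_c \<open>S > 0\<close> t])
    fix b w y
    assume "b \<in> blocks n K zstar"
      "w \<in> set_pmf (Pi_pmf (blocks n K zstar) (\<lambda>_. undefined) (\<lambda>b. map_pmf (\<lambda>x. restrict x (block n zstar b)) p))"
      "y \<in> set_pmf (map_pmf (\<lambda>x. restrict x (block n zstar b)) p)"
    then show "\<bar>G w - G (w(b := y))\<bar> \<le> c b"
      unfolding G_def c_def L_def block_product_def[symmetric]
      using f by (intro block_product_bounded_differences[OF zs supp ld]) auto
  qed (use bnd in \<open>auto simp: P_def block_product_def\<close>)
  moreover have "measure_pmf.prob p {x. \<bar>f x z - measure_pmf.expectation p (\<lambda>y. f y z)\<bar> \<ge> t}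
      = measure_pmf.prob P {w. \<bar>G w - measure_pmf.expectation P G\<bar> \<ge> t}"
    unfolding P_def G_def
    by (subst (1 2) map_pmf_merge_block_product[OF zs supp ld, symmetric]) (simp add: vimage_def)
  moreover have "2 * S = 2 * real K * real (nmax n K z)^2 * real (nmax n K zstar)^4 * (lip n Xs f z)^2"
    by (simp add: S_def L_def mult_ac)
  ultimately show ?thesis by simp
qed

theorem lemma1:
  shows "\<exists>c>0. \<forall>(n::nat) (K::nat) (Xs :: nat \<times> nat \<Rightarrow> 'v set) zstar p
           (f :: (nat \<times> nat \<Rightarrow> 'v) \<Rightarrow> (nat \<Rightarrow> nat) \<Rightarrow> real) z t.
      n > 0 \<and>
      (\<forall>e \<in> edges n. countable (Xs e)) \<and>
      exp_family p (sample_space n Xs) \<and>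
      zstar \<in> nbhd_structs n K \<and>
      local_dependence n K Xs zstar p \<and>
      (\<forall>z' \<in> nbhd_structs n K. depends_within n f z' \<and>
          bdd_above (lip_coeff n Xs f z') \<and> lip n Xs f z' > 0 \<and>
          integrable (measure_pmf p) (\<lambda>x. f x z')) \<and>
      z \<in> nbhd_structs n K \<and> t > 0
      \<longrightarrow> measure_pmf.prob p
            {x. \<bar>f x z - measure_pmf.expectation p (\<lambda>y. f y z)\<bar> \<ge> t}
          \<le> 2 * exp (- (t^2 / (c * real K * real (nmax n K z)^2 * real (nmax n K zstar)^4
                                  * (lip n Xs f z)^2)))"
proof (intro exI[of _ "2::real"] conjI allI impI)
  fix n K :: nat and Xs :: "nat \<times> nat \<Rightarrow> 'v set" and zstar z :: "nat \<Rightarrow> nat" and t :: real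
    and p :: "(nat \<times> nat \<Rightarrow> 'v) pmf" and f :: "(nat \<times> nat \<Rightarrow> 'v) \<Rightarrow> (nat \<Rightarrow> nat) \<Rightarrow> real"
  assume h: "n > 0 \<and>
      (\<forall>e \<in> edges n. countable (Xs e)) \<and>
      exp_family p (sample_space n Xs) \<and>
      zstar \<in> nbhd_structs n K \<and>
      local_dependence n K Xs zstar p \<and>
      (\<forall>z' \<in> nbhd_structs n K. depends_within n f z' \<and>
          bdd_above (lip_coeff n Xs f z') \<and> lip n Xs f z' > 0 \<and>
          integrable (measure_pmf p) (\<lambda>x. f x z')) \<and>
      z \<in> nbhd_structs n K \<and> t > 0"
  then have "set_pmf p \<subseteq> sample_space n Xs" by (simp add: exp_family_def)
  with h show "measure_pmf.prob p {x. \<bar>f x z - measure_pmf.expectation p (\<lambda>y. f y z)\<bar> \<ge> t}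
      \<le> 2 * exp (- (t^2 / (2 * real K * real (nmax n K z)^2 * real (nmax n K zstar)^4
                              * (lip n Xs f z)^2)))"
    by (intro concentration_local_dependence) auto
qed simp

end
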